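(* Let $k\in\mathbb N$ and let $\pi$ be a partition of $\{1,\dots,k\}$ with $q$ blocks. Then every graph that is consistent with $\pi$ has at most $k-q+1$ connected components.
   Context: Let $\pi$ be a partition of $\{1,\dots,k\}$ with blocks $B^{(1)},\dots,B^{(q)}$; indices are taken cyclically, i.e. $0$ is identified with $k$ and $k+1$ with $1$. The closed blocks are $\overline B^{(s)}=B^{(s)}\cup\{l\in\{1,\dots,k\}: l-1\in B^{(s)}\}$. The multiplicity $m_\pi(l)$ of $l\in\{1,\dots,k\}$ is $2$ if $l$ and $l-1$ lie in the same block of $\pi$, and $1$ otherwise. A graph consistent with $\pi$ is an undirected multigraph $G$ (loops allowed, a loop contributing $2$ to the degree) with vertex set $\{1,\dots,k\}$ and $k$ edges, whose edge set can be written as a disjoint union $E^{(1)}\cup\dots\cup E^{(q)}$ such that for each $s$, all edges of $E^{(s)}$ have both ends in $\overline B^{(s)}$ and, in the subgraph with vertex set $\overline B^{(s)}$ and edge set $E^{(s)}$, every vertex $l$ has degree $m_\pi(l)$. *)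

theory Defs
  imports Main "HOL-Library.Disjoint_Sets"
begin

text \<open>Cyclic predecessor on {1..k}: 0 is identified with k.\<close>
definition cpred :: "nat \<Rightarrow> nat \<Rightarrow> nat" where
  "cpred k l = (if l = 1 then k else l - 1)"

definition closed_block :: "nat \<Rightarrow> nat set \<Rightarrow> nat set" where
  "closed_block k B = B \<union> {l \<in> {1..k}. cpred k l \<in> B}"

definition mult :: "nat \<Rightarrow> nat set set \<Rightarrow> nat \<Rightarrow> nat" where
  "mult k P l = (if \<exists>B\<in>P. l \<in> B \<and> cpred k l \<in> B then 2 else 1)"

text \<open>A multigraph on vertex set {1..k} is given by its list of edges; an edge (a,b)
  is undirected, (a,a) is a loop. Degree of l in the subgraph formed by the edges
  with indices in I (a loop counts 2).\<close>
definition deg_on :: "(nat \<times> nat) list \<Rightarrow> nat set \<Rightarrow> nat \<Rightarrow> nat" where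
  "deg_on es I l = (\<Sum>i\<in>I \<inter> {..<length es}.
      (if fst (es ! i) = l then 1 else 0) + (if snd (es ! i) = l then 1 else 0))"

text \<open>Consistency: the edges are split into classes E^(B) (B a block), via the
  assignment c of each edge index to a block.\<close>
definition consistent :: "nat \<Rightarrow> nat set set \<Rightarrow> (nat \<times> nat) list \<Rightarrow> bool" where
  "consistent k P es \<longleftrightarrow> length es = k \<and>
     (\<exists>c :: nat \<Rightarrow> nat set.
        (\<forall>i<length es. c i \<in> P \<and> fst (es ! i) \<in> closed_block k (c i)
                                  \<and> snd (es ! i) \<in> closed_block k (c i)) \<and>
        (\<forall>B\<in>P. \<forall>l\<in>closed_block k B.
            deg_on es {i. c i = B} l = mult k P l))"

definition adj :: "(nat \<times> nat) list \<Rightarrow> (nat \<times> nat) set" where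
  "adj es = {(a, b). \<exists>i<length es. es ! i = (a, b) \<or> es ! i = (b, a)}"

definition num_components :: "nat \<Rightarrow> (nat \<times> nat) list \<Rightarrow> nat" where
  "num_components k es = card ({1..k} // ((adj es)\<^sup>* \<inter> ({1..k} \<times> {1..k})))"

end

theory Submission
  imports Defs
begin

(*
  Let T be the set of minima of the blocks of \<pi>, with the vertex 1 removed; it has at
  least q - 1 elements.  The heart of the proof is that no connected component of a
  graph consistent with \<pi> lies entirely inside T.  Then every component meets the
  complement {1..k} - T, which has at most k - q + 1 elements, and so there are at most
  that many components.

  Why no component X can lie inside T: a vertex l = min B \<noteq> 1 has cyclic predecessor
  l - 1 outside B, hence multiplicity 1, so exactly one edge of E^(B) is incident to l.
  Its other end u is again in X, hence the minimum of a different block, so u \<notin> B and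
  therefore u - 1 \<in> B.  Thus every block B_l (l \<in> X) contains a predecessor of a vertex
  of X, and so does the block of (min X) - 1, which is different from all B_l.  This gives
  |X| + 1 distinct blocks meeting the |X|-element set of predecessors of X: impossible.
*)

definition block_of :: "'a set set \<Rightarrow> 'a \<Rightarrow> 'a set" where
  "block_of P x = (THE B. B \<in> P \<and> x \<in> B)"

lemma block_of_eq:
  assumes "partition_on A P" "B \<in> P" "x \<in> B"
  shows "block_of P x = B"
proof -
  have unique: "B' = B" if "B' \<in> P" "x \<in> B'" for B'
    using disjointD[OF partition_onD2[OF assms(1)] that(1) assms(2)] that(2) assms(3) by blast
  show ?thesis
    unfolding block_of_def by (rule the_equality) (use assms(2,3) unique in blast)+
qed

lemma block_of_in:
  assumes "partition_on A P" "x \<in> A"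
  shows "block_of P x \<in> P" "x \<in> block_of P x"
proof -
  obtain B where "B \<in> P" "x \<in> B" using assms partition_onD1 by blast
  then show "block_of P x \<in> P" "x \<in> block_of P x"
    using block_of_eq[OF assms(1)] by auto
qed

lemma partition_block_finite:
  assumes "partition_on A P" "finite A" "B \<in> P"
  shows "finite B" "B \<noteq> {}"
proof -
  have "B \<subseteq> A" using partition_onD1[OF assms(1)] assms(3) by blast
  then show "finite B" using assms(2) by (rule finite_subset)
  show "B \<noteq> {}" using partition_onD3[OF assms(1)] assms(3) by blast
qed

lemma block_of_Min:
  assumes "partition_on A P" "finite A" "B \<in> P"
  shows "block_of P (Min B) = B"
proof -
  have "finite B" "B \<noteq> {}" using partition_block_finite[OF assms] by auto
  then show ?thesis using block_of_eq[OF assms(1,3)] Min_in by simp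
qed

definition nonroot_minima :: "nat set set \<Rightarrow> nat set" where
  "nonroot_minima P = Min ` P - {1}"

text \<open>Distinct blocks have distinct minima, so there are at least q - 1 nonroot minima.\<close>
lemma card_nonroot_minima:
  assumes "partition_on A P" "finite A"
  shows "card P - 1 \<le> card (nonroot_minima P)"
proof -
  have "inj_on Min P"
  proof (rule inj_onI)
    fix B B' assume "B \<in> P" "B' \<in> P" "Min B = Min B'"
    then show "B = B'" using block_of_Min[OF assms] by metis
  qed
  then have "card (Min ` P) = card P" by (rule card_image)
  then show ?thesis
    unfolding nonroot_minima_def using diff_card_le_card_Diff[of "{1}" "Min ` P"] by simp
qed

lemma nonroot_minima_block:
  assumes part: "partition_on {1..k} P" and l: "l \<in> nonroot_minima P"
  shows "l \<in> {2..k}" "block_of P l \<in> P" "l \<in> block_of P l" "Min (block_of P l) = l"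
proof -
  obtain B where B: "B \<in> P" "l = Min B" "l \<noteq> 1"
    using l unfolding nonroot_minima_def by auto
  have "finite B" "B \<noteq> {}" using partition_block_finite[OF part _ B(1)] by simp_all
  then have lB: "l \<in> B" using B(2) by simp
  moreover have "B \<subseteq> {1..k}" using partition_onD1[OF part] B(1) by blast
  ultimately show "l \<in> {2..k}" using B(3) by auto
  have "block_of P l = B" using block_of_eq[OF part B(1) lB] .
  then show "block_of P l \<in> P" "l \<in> block_of P l" "Min (block_of P l) = l"
    using B lB by simp_all
qed

lemma nonroot_minimum_mult:
  assumes part: "partition_on {1..k} P" and l: "l \<in> nonroot_minima P"
  shows "cpred k l \<notin> block_of P l" "mult k P l = 1"
proof -
  note Bl = nonroot_minima_block[OF part l]
  have fin: "finite (block_of P l)" using partition_block_finite[OF part _ Bl(2)] by simp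
  have "cpred k l = l - 1" "l - 1 < l" using Bl(1) unfolding cpred_def by auto
  then show npred: "cpred k l \<notin> block_of P l"
    using Bl(4) Min_le[OF fin] by (metis leD)
  have "B = block_of P l" if "B \<in> P" "l \<in> B" for B
    using block_of_eq[OF part that] by simp
  then show "mult k P l = 1" using npred unfolding mult_def by auto
qed

definition block_decomposition ::
    "nat \<Rightarrow> nat set set \<Rightarrow> (nat \<times> nat) list \<Rightarrow> (nat \<Rightarrow> nat set) \<Rightarrow> bool" where
  "block_decomposition k P es c \<longleftrightarrow>
     (\<forall>i<length es. c i \<in> P \<and> fst (es ! i) \<in> closed_block k (c i)
                            \<and> snd (es ! i) \<in> closed_block k (c i)) \<and>
     (\<forall>B\<in>P. \<forall>l\<in>closed_block k B. deg_on es {i. c i = B} l = mult k P l)"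

lemma consistent_iff_block_decomposition:
  "consistent k P es \<longleftrightarrow> length es = k \<and> (\<exists>c. block_decomposition k P es c)"
  unfolding consistent_def block_decomposition_def by simp

lemma deg_on_eq_1:
  assumes "deg_on es I l = 1"
  shows "\<exists>i\<in>I. i < length es \<and> (\<exists>u. u \<noteq> l \<and> (es ! i = (l, u) \<or> es ! i = (u, l)))"
proof -
  define f :: "nat \<Rightarrow> nat" where
    "f i = (if fst (es ! i) = l then 1 else 0) + (if snd (es ! i) = l then 1 else 0)" for i
  have sum1: "sum f (I \<inter> {..<length es}) = 1" using assms unfolding deg_on_def f_def by simp
  then obtain i where i: "i \<in> I \<inter> {..<length es}" "f i \<noteq> 0"
    by (metis one_neq_zero sum.neutral)
  have "f i \<le> sum f (I \<inter> {..<length es})" by (rule member_le_sum) (use i in auto)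
  with sum1 i have "f i = 1" by linarith
  then have "(fst (es ! i) = l) \<noteq> (snd (es ! i) = l)" unfolding f_def by (auto split: if_splits)
  then have "\<exists>u. u \<noteq> l \<and> (es ! i = (l, u) \<or> es ! i = (u, l))"
    by (cases "es ! i") auto
  with i show ?thesis by blast
qed

text \<open>At a nonroot block minimum l the multiplicity is 1, so some edge assigned to the block
  of l joins l to another vertex of the closed block.\<close>
lemma edge_at_nonroot_minimum:
  assumes part: "partition_on {1..k} P" and dec: "block_decomposition k P es c"
    and l: "l \<in> nonroot_minima P"
  shows "\<exists>i u. i < length es \<and> u \<noteq> l \<and> (es ! i = (l, u) \<or> es ! i = (u, l))
               \<and> u \<in> closed_block k (block_of P l)"
proof -
  define B where "B = block_of P l"
  have B: "B \<in> P" "l \<in> B" using nonroot_minima_block[OF part l] B_def by simp_all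
  then have "l \<in> closed_block k B" unfolding closed_block_def by simp
  then have "deg_on es {i. c i = B} l = 1"
    using dec B(1) nonroot_minimum_mult(2)[OF part l] unfolding block_decomposition_def by simp
  then obtain i u where i: "c i = B" "i < length es" "u \<noteq> l" "es ! i = (l, u) \<or> es ! i = (u, l)"
    using deg_on_eq_1 by blast
  have "fst (es ! i) \<in> closed_block k B" "snd (es ! i) \<in> closed_block k B"
    using dec i(1,2) unfolding block_decomposition_def by auto
  then have "u \<in> closed_block k B" using i(4) by auto
  with i show ?thesis unfolding B_def by blast
qed

text \<open>If a set X of nonroot minima is closed under edges, then the block of each l \<in> X
  contains the predecessor of a vertex of X: the neighbour u of l is a minimum of
  another block, so it lies in the closed block of l only as a successor.\<close>
lemma block_contains_pred:
  assumes part: "partition_on {1..k} P" and dec: "block_decomposition k P es c"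
    and X: "X \<subseteq> nonroot_minima P"
    and closed: "\<forall>i<length es. fst (es ! i) \<in> X \<longleftrightarrow> snd (es ! i) \<in> X"
    and l: "l \<in> X"
  shows "\<exists>u\<in>X. cpred k u \<in> block_of P l"
proof -
  obtain i u where i: "i < length es" "u \<noteq> l" "es ! i = (l, u) \<or> es ! i = (u, l)"
    and u_cl: "u \<in> closed_block k (block_of P l)"
    using edge_at_nonroot_minimum[OF part dec] X l by blast
  have uX: "u \<in> X" using closed[rule_format, OF i(1)] i(3) l by auto
  have l_min: "l \<in> nonroot_minima P" and u_min: "u \<in> nonroot_minima P" using X l uX by auto
  have "u \<notin> block_of P l"
  proof
    assume "u \<in> block_of P l"
    then have "block_of P u = block_of P l"
      by (rule block_of_eq[OF part nonroot_minima_block(2)[OF part l_min]])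
    then have "Min (block_of P u) = Min (block_of P l)" by simp
    then show False using nonroot_minima_block(4)[OF part] l_min u_min i(2) by simp
  qed
  then have "cpred k u \<in> block_of P l" using u_cl unfolding closed_block_def by simp
  with uX show ?thesis ..
qed

text \<open>The key lemma: the blocks of the elements of X together with the block of the
  predecessor of min X are |X| + 1 distinct blocks, yet all of them are blocks of
  predecessors of elements of X.\<close>
lemma no_closed_set_of_nonroot_minima:
  assumes part: "partition_on {1..k} P" and dec: "block_decomposition k P es c"
    and X: "X \<subseteq> nonroot_minima P" "X \<noteq> {}"
    and closed: "\<forall>i<length es. fst (es ! i) \<in> X \<longleftrightarrow> snd (es ! i) \<in> X"
  shows False
proof -
  have X_range: "X \<subseteq> {2..k}" using nonroot_minima_block(1)[OF part] X(1) by blast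
  then have finX: "finite X" using finite_subset[OF X_range] by simp
  have Min_block: "Min (block_of P l) = l" if "l \<in> X" for l
    using nonroot_minima_block(4)[OF part] X(1) that by blast
  define Q where "Q = block_of P ` cpred k ` X"
  have own_blocks: "block_of P ` X \<subseteq> Q"
  proof
    fix B assume "B \<in> block_of P ` X"
    then obtain l where l: "l \<in> X" "B = block_of P l" by blast
    then obtain u where u: "u \<in> X" "cpred k u \<in> B"
      using block_contains_pred[OF part dec X(1) closed] by blast
    have "B \<in> P" using nonroot_minima_block(2)[OF part] X(1) l by blast
    then have "block_of P (cpred k u) = B" using block_of_eq[OF part _ u(2)] by simp
    then show "B \<in> Q" unfolding Q_def using u(1) by blast
  qed
  define v where "v = Min X"
  have v: "v \<in> X" "v \<in> {2..k}" using Min_in[OF finX X(2)] X_range v_def by auto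
  define D where "D = block_of P (v - 1)"
  have "v - 1 \<in> {1..k}" using v(2) by auto
  then have D: "D \<in> P" "v - 1 \<in> D" unfolding D_def by (rule block_of_in[OF part])+
  have "cpred k v = v - 1" using v(2) unfolding cpred_def by simp
  then have "D \<in> Q" unfolding Q_def D_def using v(1) by (metis image_eqI)
  moreover have D_new: "D \<notin> block_of P ` X"
  proof
    assume "D \<in> block_of P ` X"
    then obtain l where l: "l \<in> X" "D = block_of P l" by blast
    have "finite D" using partition_block_finite(1)[OF part _ D(1)] by simp
    then have "l \<le> v - 1" using Min_le[of D "v - 1"] Min_block[OF l(1)] l(2) D(2) by simp
    moreover have "v \<le> l" using l(1) finX v_def by simp
    ultimately show False using v(2) by auto
  qed
  ultimately have "insert D (block_of P ` X) \<subseteq> Q" using own_blocks by blast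
  then have "card (insert D (block_of P ` X)) \<le> card Q"
    unfolding Q_def using finX by (intro card_mono) simp_all
  also have "\<dots> \<le> card (cpred k ` X)" unfolding Q_def using finX by (intro card_image_le) simp
  also have "\<dots> \<le> card X" using finX by (rule card_image_le)
  finally show False
    using D_new finX card_image[OF inj_on_inverseI[where g = Min, OF Min_block]] by simp
qed

lemma equiv_reachable_on:
  assumes "sym r"
  shows "equiv A (r\<^sup>* \<inter> A \<times> A)"
proof (rule equivI)
  show "refl_on A (r\<^sup>* \<inter> A \<times> A)" unfolding refl_on_def by auto
  show "sym (r\<^sup>* \<inter> A \<times> A)"
    by (rule sym_Int[OF sym_rtrancl[OF assms]]) (auto simp: sym_def)
  show "trans (r\<^sup>* \<inter> A \<times> A)"
    by (rule trans_Int[OF trans_rtrancl]) (auto simp: trans_def)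
qed auto

lemma component_closed:
  assumes "X \<in> A // (r\<^sup>* \<inter> A \<times> A)" "a \<in> X" "(a, b) \<in> r" "b \<in> A"
  shows "b \<in> X"
proof -
  obtain x where x: "x \<in> A" "X = (r\<^sup>* \<inter> A \<times> A) `` {x}"
    using assms(1) unfolding quotient_def by blast
  then have "(x, a) \<in> r\<^sup>*" using assms(2) by blast
  then have "(x, b) \<in> r\<^sup>*" using assms(3) by (rule rtrancl_into_rtrancl)
  then show ?thesis using x assms(4) by blast
qed

lemma card_quotient_le:
  assumes "finite S" "equiv A R" "\<And>X. X \<in> A // R \<Longrightarrow> X \<inter> S \<noteq> {}"
  shows "card (A // R) \<le> card S"
proof -
  have "A // R \<subseteq> (\<lambda>s. R `` {s}) ` (S \<inter> A)"
  proof
    fix X assume X: "X \<in> A // R"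
    then obtain s where s: "s \<in> X" "s \<in> S" using assms(3) by blast
    obtain x where "X = R `` {x}" using X by (rule quotientE)
    then have "X = R `` {s}" using s(1) equiv_class_eq[OF assms(2)] by blast
    moreover have "s \<in> A" using in_quotient_imp_subset[OF assms(2) X] s(1) by blast
    ultimately show "X \<in> (\<lambda>s. R `` {s}) ` (S \<inter> A)" using s by blast
  qed
  then have "card (A // R) \<le> card ((\<lambda>s. R `` {s}) ` (S \<inter> A))"
    using assms(1) by (intro card_mono) simp_all
  also have "\<dots> \<le> card (S \<inter> A)" using assms(1) by (intro card_image_le) simp
  also have "\<dots> \<le> card S" using assms(1) by (intro card_mono) auto
  finally show ?thesis .
qed

lemma decomposition_edges_in_range:
  assumes part: "partition_on {1..k} P" and dec: "block_decomposition k P es c"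
    and i: "i < length es"
  shows "fst (es ! i) \<in> {1..k}" "snd (es ! i) \<in> {1..k}"
proof -
  have "c i \<in> P" and ends: "fst (es ! i) \<in> closed_block k (c i)" "snd (es ! i) \<in> closed_block k (c i)"
    using dec i unfolding block_decomposition_def by auto
  then have "c i \<subseteq> {1..k}" using partition_onD1[OF part] by blast
  then have "closed_block k (c i) \<subseteq> {1..k}" unfolding closed_block_def by auto
  then show "fst (es ! i) \<in> {1..k}" "snd (es ! i) \<in> {1..k}" using ends by auto
qed

text \<open>Hence each component of a consistent graph is closed under edges, and by the key
  lemma it contains a vertex that is not a nonroot block minimum.\<close>
lemma component_meets_non_minima:
  assumes part: "partition_on {1..k} P" and dec: "block_decomposition k P es c"
    and X: "X \<in> {1..k} // ((adj es)\<^sup>* \<inter> {1..k} \<times> {1..k})"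
  shows "X \<inter> ({1..k} - nonroot_minima P) \<noteq> {}"
proof
  assume disj: "X \<inter> ({1..k} - nonroot_minima P) = {}"
  have equiv: "equiv {1..k} ((adj es)\<^sup>* \<inter> {1..k} \<times> {1..k})"
    by (rule equiv_reachable_on) (auto simp: sym_def adj_def)
  have "X \<subseteq> {1..k}" "X \<noteq> {}"
    using in_quotient_imp_subset[OF equiv X] in_quotient_imp_non_empty[OF equiv X] by auto
  then have "X \<subseteq> nonroot_minima P" using disj by blast
  moreover have "\<forall>i<length es. fst (es ! i) \<in> X \<longleftrightarrow> snd (es ! i) \<in> X"
  proof (intro allI impI)
    fix i assume i: "i < length es"
    have "(fst (es ! i), snd (es ! i)) \<in> adj es" "(snd (es ! i), fst (es ! i)) \<in> adj es"
      unfolding adj_def using i by force+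
    then show "fst (es ! i) \<in> X \<longleftrightarrow> snd (es ! i) \<in> X"
      using component_closed[OF X] decomposition_edges_in_range[OF part dec i] by blast
  qed
  ultimately show False
    using no_closed_set_of_nonroot_minima[OF part dec] \<open>X \<noteq> {}\<close> by blast
qed

theorem mainTheorem2:
  fixes k :: nat and P :: "nat set set" and es :: "(nat \<times> nat) list"
  assumes "partition_on {1..k} P"
      and "consistent k P es"
  shows "num_components k es \<le> k - card P + 1"
proof -
  obtain c where dec: "block_decomposition k P es c"
    using assms(2) consistent_iff_block_decomposition by blast
  define S where "S = {1..k} - nonroot_minima P"
  have "nonroot_minima P \<subseteq> {1..k}" using nonroot_minima_block(1)[OF assms(1)] by fastforce
  have equiv: "equiv {1..k} ((adj es)\<^sup>* \<inter> {1..k} \<times> {1..k})"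
    by (rule equiv_reachable_on) (auto simp: sym_def adj_def)
  have "num_components k es \<le> card S"
    unfolding num_components_def S_def
    by (rule card_quotient_le[OF _ equiv component_meets_non_minima[OF assms(1) dec]]) simp
  also have "card S = k - card (nonroot_minima P)"
    unfolding S_def using \<open>nonroot_minima P \<subseteq> {1..k}\<close> by (simp add: card_Diff_subset finite_subset)
  also have "\<dots> \<le> k - card P + 1"
    using card_nonroot_minima[OF assms(1)] by simp
  finally show ?thesis .
qed

end
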